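(* For each notion of guarding $\mathfrak{g}$ and $\sigma$-structures $\mathcal{A}, \mathcal{B}$, there is a bijective correspondence between (1) coKleisli morphisms, i.e. $\sigma$-homomorphisms, $\mathbb{G}^{\mathfrak{g}} \mathcal{A} \to \mathcal{B}$, and (2) winning strategies for Duplicator in the $\mathfrak{g}$-guarded simulation game from $\mathcal{A}$ to $\mathcal{B}$. Thus $\mathcal{A} \preceq^{\mathfrak{g}} \mathcal{B}$ iff there is a homomorphism $\mathbb{G}^{\mathfrak{g}} \mathcal{A} \to \mathcal{B}$.
   Context: A notion of guarding $\mathfrak{g}$ is atom, loose, or clique guarding; a subset of a $\sigma$-structure is $\mathfrak{g}$-guarded if contained in the support of a tuple satisfying a $\mathfrak{g}$-guard. $\mathbb{G}^{\mathfrak{g}}\mathcal{A}$ is the $\sigma$-structure whose universe consists of equivalence classes $[p,a]$ of focussed plays $\langle p,a\rangle$, where $p=[U_1,\ldots,U_n]$ is a non-empty list of $\mathfrak{g}$-guarded sets of $\mathcal{A}$ and $a \in U_n = \lambda(p)$; $\langle p,a\rangle \sim \langle q,a'\rangle$ iff $a=a'$, the greatest common prefix $p\sqcap q$ is non-empty, and $a$ lies in the last element of every play on the prefix-order paths from $p \sqcap q$ to $p$ and to $q$. Relations: $R^{\mathbb{G}\mathcal{A}} = \{([p,a_1],\ldots,[p,a_r]) \mid R^{\mathcal{A}}(a_1,\ldots,a_r)\}$. The $\mathfrak{g}$-guarded simulation game from $\mathcal{A}$ to $\mathcal{B}$: set $X_0 = \varnothing$, $\varphi_0 = \varnothing$;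 in round $n+1$ Spoiler picks a $\mathfrak{g}$-guarded set $X_{n+1}$ in $\mathcal{A}$, and Duplicator must respond with a $\mathfrak{g}$-guarded set $Y_{n+1}$ in $\mathcal{B}$ and a partial homomorphism $\varphi_{n+1} : X_{n+1} \to Y_{n+1}$ agreeing with $\varphi_n$ on $X_{n+1}\cap X_n$. Duplicator wins if he can always respond. $\mathcal{A} \preceq^{\mathfrak{g}} \mathcal{B}$ means Duplicator has a winning strategy. *)

theory Defs
  imports Main "HOL-Library.Sublist" "HOL-Library.FuncSet"
begin

record ('r, 'a) struc =
  univ :: "'a set"
  rel  :: "'r \<Rightarrow> 'a list set"

definition wf_struc :: "('r \<Rightarrow> nat) \<Rightarrow> ('r, 'a) struc \<Rightarrow> bool" where
  "wf_struc ar A \<longleftrightarrow>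
     (\<forall>R. \<forall>as \<in> rel A R. length as = ar R \<and> set as \<subseteq> univ A)"

datatype guarding = Atom | Loose | Clique

(* X is g-guarded iff X is contained in the support of a tuple satisfying a g-guard.
   Atom guards: R(x) or x = x.
   Loose guards: conjunctions of atoms in which every two variables co-occur in a conjunct
     (supports: finite nonempty sets in which every two distinct elements co-occur in a
      relation tuple lying inside the set).
   Clique guards: exists z. (conjunction of atoms) with every two of the free variables
     co-occurring in a conjunct (supports: finite nonempty cliques of the Gaifman graph).
   The first disjunct covers relation tuples (including nullary ones). *)
definition guarded :: "guarding \<Rightarrow> ('r, 'a) struc \<Rightarrow> 'a set \<Rightarrow> bool" where
  "guarded g A X \<longleftrightarrow>
     (\<exists>R. \<exists>as \<in> rel A R. X \<subseteq> set as) \<or>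
     (\<exists>Y. X \<subseteq> Y \<and> Y \<noteq> {} \<and> finite Y \<and> Y \<subseteq> univ A \<and>
        (case g of
           Atom \<Rightarrow> (\<forall>a\<in>Y. \<forall>b\<in>Y. a = b)
         | Loose \<Rightarrow> (\<forall>a\<in>Y. \<forall>b\<in>Y. a \<noteq> b \<longrightarrow>
                      (\<exists>R. \<exists>as \<in> rel A R. set as \<subseteq> Y \<and> a \<in> set as \<and> b \<in> set as))
         | Clique \<Rightarrow> (\<forall>a\<in>Y. \<forall>b\<in>Y. a \<noteq> b \<longrightarrow>
                      (\<exists>R. \<exists>as \<in> rel A R. a \<in> set as \<and> b \<in> set as))))"

definition play :: "guarding \<Rightarrow> ('r, 'a) struc \<Rightarrow> 'a set list \<Rightarrow> bool" where
  "play g A p \<longleftrightarrow> p \<noteq> [] \<and> (\<forall>U \<in> set p. guarded g A U)"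

definition fplays :: "guarding \<Rightarrow> ('r, 'a) struc \<Rightarrow> ('a set list \<times> 'a) set" where
  "fplays g A = {(p, a). play g A p \<and> a \<in> last p}"

definition gequiv :: "guarding \<Rightarrow> ('r, 'a) struc \<Rightarrow> (('a set list \<times> 'a) \<times> ('a set list \<times> 'a)) set" where
  "gequiv g A = {((p, a), (q, a')). (p, a) \<in> fplays g A \<and> (q, a') \<in> fplays g A \<and> a = a' \<and>
      longest_common_prefix p q \<noteq> [] \<and>
      (\<forall>r. prefix (longest_common_prefix p q) r \<and> prefix r p \<longrightarrow> a \<in> last r) \<and>
      (\<forall>r. prefix (longest_common_prefix p q) r \<and> prefix r q \<longrightarrow> a \<in> last r)}"

definition gclass :: "guarding \<Rightarrow> ('r, 'a) struc \<Rightarrow> 'a set list \<Rightarrow> 'a \<Rightarrow> ('a set list \<times> 'a) set" where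
  "gclass g A p a = gequiv g A `` {(p, a)}"

definition GG :: "guarding \<Rightarrow> ('r, 'a) struc \<Rightarrow> ('r, ('a set list \<times> 'a) set) struc" where
  "GG g A = \<lparr> univ = fplays g A // gequiv g A,
              rel = (\<lambda>R. {map (gclass g A p) as | p as.
                             play g A p \<and> as \<in> rel A R \<and> set as \<subseteq> last p}) \<rparr>"

definition hom :: "('r, 'a) struc \<Rightarrow> ('r, 'b) struc \<Rightarrow> ('a \<Rightarrow> 'b) \<Rightarrow> bool" where
  "hom A B h \<longleftrightarrow> h ` univ A \<subseteq> univ B \<and> (\<forall>R. \<forall>as \<in> rel A R. map h as \<in> rel B R)"

definition partial_hom :: "('r, 'a) struc \<Rightarrow> ('r, 'b) struc \<Rightarrow> 'a set \<Rightarrow> 'b set \<Rightarrow> ('a \<Rightarrow> 'b) \<Rightarrow> bool" where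
  "partial_hom A B X Y f \<longleftrightarrow> f ` X \<subseteq> Y \<and>
     (\<forall>R. \<forall>as \<in> rel A R. set as \<subseteq> X \<longrightarrow> map f as \<in> rel B R)"

(* A Duplicator strategy maps the sequence p = [X_1,...,X_n] of Spoiler moves to the
   partial map phi_n : X_n -> B (values outside X_n, or for non-plays, are undefined).
   It is winning iff every response is legal: phi_n is a partial homomorphism into some
   g-guarded Y_n of B, agreeing with phi_{n-1} on X_n \<inter> X_{n-1} (X_0 = {} so no constraint at n = 1). *)
definition win_strat :: "guarding \<Rightarrow> ('r, 'a) struc \<Rightarrow> ('r, 'b) struc \<Rightarrow> ('a set list \<Rightarrow> 'a \<Rightarrow> 'b) \<Rightarrow> bool" where
  "win_strat g A B s \<longleftrightarrow>
     (\<forall>p a. (p, a) \<notin> fplays g A \<longrightarrow> s p a = undefined) \<and>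
     (\<forall>p. play g A p \<longrightarrow>
        (\<exists>Y. guarded g B Y \<and> partial_hom A B (last p) Y (s p)) \<and>
        (\<forall>q X. p = q @ [X] \<and> q \<noteq> [] \<longrightarrow> (\<forall>a \<in> X \<inter> last q. s p a = s q a)))"

definition guarded_sim :: "guarding \<Rightarrow> ('r, 'a) struc \<Rightarrow> ('r, 'b) struc \<Rightarrow> bool" where
  "guarded_sim g A B \<longleftrightarrow> (\<exists>s. win_strat g A B s)"

end

(*
  A homomorphism h from G A to B gives Duplicator the strategy that answers the play p by
  a |-> h [p, a] on the last move of p.  Each answer is a partial homomorphism into a guarded
  set: any guard of A can be played as the next move X, and [p @ [X], a] = [p, a] for
  a in X and in the last move of p, so the guard is realised by relation tuples of G A that h
  maps into B.  The same identity makes consecutive answers agree.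
  Conversely, the agreement condition keeps the answer at a fixed along any prefix path on
  which a stays in the last move, so a winning strategy is constant on the classes [p, a] and
  factors through G A; that factorisation is a homomorphism because every answer is a partial
  homomorphism.
*)

theory Submission
  imports Defs
begin

section \<open>The equivalence of focussed plays\<close>

definition persists_along :: "'a set list \<Rightarrow> 'a set list \<Rightarrow> 'a \<Rightarrow> bool" where
  "persists_along c p a \<longleftrightarrow> (\<forall>r. prefix c r \<and> prefix r p \<longrightarrow> a \<in> last r)"

lemma persists_along_refl: "a \<in> last p \<Longrightarrow> persists_along p p a"
  unfolding persists_along_def using prefix_order.antisym by blast

lemma persists_along_snoc:
  "persists_along c p a \<Longrightarrow> prefix c p \<Longrightarrow> a \<in> X \<Longrightarrow> persists_along c (p @ [X]) a"
  unfolding persists_along_def by auto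

lemma persists_along_butlast:
  "persists_along c (p @ [X]) a \<Longrightarrow> persists_along c p a"
  unfolding persists_along_def by auto

lemma persists_along_mono:
  "persists_along c p a \<Longrightarrow> prefix c c' \<Longrightarrow> persists_along c' p a"
  unfolding persists_along_def using prefix_order.order_trans by blast

lemma persists_along_trans:
  assumes "prefix c d" "prefix d q" "prefix d r"
    and "persists_along c q a" "persists_along d r a"
  shows "persists_along c r a"
  unfolding persists_along_def
proof (intro allI impI)
  fix t assume t: "prefix c t \<and> prefix t r"
  then consider "prefix t d" | "prefix d t" using assms(3) prefix_same_cases by blast
  then show "a \<in> last t"
  proof cases
    case 1
    then have "prefix t q" using assms(2) prefix_order.order_trans by blast
    then show ?thesis using assms(4) t unfolding persists_along_def by blast
  next
    case 2
    then show ?thesis using assms(5) t unfolding persists_along_def by blast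
  qed
qed

lemma gequiv_iff:
  "((p, a), (q, b)) \<in> gequiv g A \<longleftrightarrow>
     (p, a) \<in> fplays g A \<and> (q, b) \<in> fplays g A \<and> a = b \<and>
     (\<exists>c. c \<noteq> [] \<and> prefix c p \<and> prefix c q \<and> persists_along c p a \<and> persists_along c q a)"
    (is "_ \<longleftrightarrow> ?fp \<and> ?fq \<and> a = b \<and> (\<exists>c. ?common c)")
proof
  let ?l = "longest_common_prefix p q"
  show "?fp \<and> ?fq \<and> a = b \<and> (\<exists>c. ?common c)" if "((p, a), (q, b)) \<in> gequiv g A"
  proof -
    have "?common ?l"
      using that longest_common_prefix_prefix1[of p q] longest_common_prefix_prefix2[of p q]
      unfolding gequiv_def persists_along_def by auto
    then show ?thesis using that unfolding gequiv_def by blast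
  qed
  show "((p, a), (q, b)) \<in> gequiv g A" if "?fp \<and> ?fq \<and> a = b \<and> (\<exists>c. ?common c)"
  proof -
    from that obtain c where c: "?fp" "?fq" "a = b" "?common c" by blast
    then have "prefix c ?l" using longest_common_prefix_max_prefix by blast
    then have "?l \<noteq> []" "persists_along ?l p a" "persists_along ?l q a"
      using c(4) persists_along_mono by auto
    then show ?thesis using c(1-3) unfolding gequiv_def persists_along_def by auto
  qed
qed

lemma gequiv_equiv: "equiv (fplays g A) (gequiv g A)"
proof (rule equivI)
  show "gequiv g A \<subseteq> fplays g A \<times> fplays g A" unfolding gequiv_def by auto
  show "refl_on (fplays g A) (gequiv g A)"
  proof (rule refl_onI)
    fix x assume x: "x \<in> fplays g A"
    then obtain p a where "x = (p, a)" "p \<noteq> []" "a \<in> last p"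
      unfolding fplays_def play_def by auto
    then show "(x, x) \<in> gequiv g A"
      using x persists_along_refl[of a p] by (auto simp: gequiv_iff intro!: exI[of _ p])
  qed
  show "sym (gequiv g A)"
  proof (rule symI)
    fix x y assume "(x, y) \<in> gequiv g A"
    moreover obtain p a q b where "x = (p, a)" "y = (q, b)" by fastforce
    ultimately have "((p, a), (q, b)) \<in> gequiv g A" by simp
    then have "((q, b), (p, a)) \<in> gequiv g A" unfolding gequiv_iff by blast
    then show "(y, x) \<in> gequiv g A" using \<open>x = (p, a)\<close> \<open>y = (q, b)\<close> by simp
  qed
  show "trans (gequiv g A)"
  proof (rule transI)
    fix x y z assume "(x, y) \<in> gequiv g A" and "(y, z) \<in> gequiv g A"
    moreover obtain p a q b r e where xyz: "x = (p, a)" "y = (q, b)" "z = (r, e)"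
      by (metis prod.exhaust)
    ultimately have xy: "((p, a), (q, b)) \<in> gequiv g A" and yz: "((q, b), (r, e)) \<in> gequiv g A"
      by simp_all
    from xy obtain c where c: "c \<noteq> []" "prefix c p" "prefix c q"
      "persists_along c p a" "persists_along c q a" and "b = a"
      unfolding gequiv_iff by blast
    from yz obtain d where d: "d \<noteq> []" "prefix d q" "prefix d r"
      "persists_along d q a" "persists_along d r a" and "e = a"
      unfolding gequiv_iff \<open>b = a\<close> by blast
    consider "prefix c d" | "prefix d c" using c(3) d(2) prefix_same_cases by blast
    then have "\<exists>e. e \<noteq> [] \<and> prefix e p \<and> prefix e r \<and> persists_along e p a \<and> persists_along e r a"
    proof cases
      case 1
      have "prefix c r" using 1 d(3) by (rule prefix_order.order_trans)
      moreover have "persists_along c r a" using persists_along_trans[OF 1 d(2,3) c(5) d(5)] .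
      ultimately show ?thesis using c(1,2,4) by blast
    next
      case 2
      have "prefix d p" using 2 c(2) by (rule prefix_order.order_trans)
      moreover have "persists_along d p a" using persists_along_trans[OF 2 c(3,2) d(4) c(4)] .
      ultimately show ?thesis using d(1,3,5) by blast
    qed
    moreover have "(p, a) \<in> fplays g A" "(r, a) \<in> fplays g A"
      using xy yz \<open>b = a\<close> \<open>e = a\<close> unfolding gequiv_iff by blast+
    ultimately have "((p, a), (r, a)) \<in> gequiv g A" unfolding gequiv_iff by blast
    then show "(x, z) \<in> gequiv g A" using xyz \<open>e = a\<close> by simp
  qed
qed

lemma gclass_eq_iff:
  assumes "(p, a) \<in> fplays g A" "(q, b) \<in> fplays g A"
  shows "gclass g A p a = gclass g A q b \<longleftrightarrow> ((p, a), (q, b)) \<in> gequiv g A"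
  unfolding gclass_def by (rule eq_equiv_class_iff[OF gequiv_equiv assms])

lemma univ_GG: "univ (GG g A) = fplays g A // gequiv g A"
  unfolding GG_def by simp

lemma rel_GG:
  "rel (GG g A) R = {map (gclass g A p) as | p as. play g A p \<and> as \<in> rel A R \<and> set as \<subseteq> last p}"
  unfolding GG_def by simp

lemma gclass_in_univ_GG: "(p, a) \<in> fplays g A \<Longrightarrow> gclass g A p a \<in> univ (GG g A)"
  unfolding univ_GG gclass_def by (rule quotientI)

lemma univ_GG_cases:
  assumes "C \<in> univ (GG g A)"
  obtains p a where "(p, a) \<in> fplays g A" "C = gclass g A p a"
  using assms unfolding univ_GG gclass_def by (auto elim!: quotientE)

lemma play_snoc: "play g A p \<Longrightarrow> guarded g A X \<Longrightarrow> play g A (p @ [X])"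
  unfolding play_def by auto

lemma play_butlast: "play g A (p @ [X]) \<Longrightarrow> p \<noteq> [] \<Longrightarrow> play g A p"
  unfolding play_def by auto

lemma gclass_snoc:
  assumes "(p, a) \<in> fplays g A" "play g A (p @ [X])" "a \<in> X"
  shows "gclass g A (p @ [X]) a = gclass g A p a"
proof -
  have pa: "p \<noteq> []" "a \<in> last p" using assms(1) unfolding fplays_def play_def by auto
  have snoc: "(p @ [X], a) \<in> fplays g A" using assms(2,3) unfolding fplays_def by simp
  have "persists_along p p a" using pa(2) by (rule persists_along_refl)
  then have "persists_along p (p @ [X]) a" using assms(3) by (simp add: persists_along_snoc)
  then have "((p @ [X], a), (p, a)) \<in> gequiv g A"
    unfolding gequiv_iff using snoc assms(1) pa(1) \<open>persists_along p p a\<close>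
    by (intro conjI exI[of _ p]) simp_all
  then show ?thesis using gclass_eq_iff[OF snoc assms(1)] by simp
qed

section \<open>Winning strategies are constant on classes\<close>

lemma win_strat_undefined:
  assumes "win_strat g A B s" "(p, a) \<notin> fplays g A"
  shows "s p a = undefined"
proof -
  have "\<forall>p a. (p, a) \<notin> fplays g A \<longrightarrow> s p a = undefined"
    using assms(1) unfolding win_strat_def by (rule conjunct1)
  then show ?thesis using assms(2) by simp
qed

lemma win_strat_partial_hom:
  assumes "win_strat g A B s" "play g A p"
  shows "\<exists>Y. guarded g B Y \<and> partial_hom A B (last p) Y (s p)"
  using assms unfolding win_strat_def by blast

lemma win_strat_snoc:
  assumes "win_strat g A B s" "play g A (p @ [X])" "p \<noteq> []" "a \<in> X" "a \<in> last p"
  shows "s (p @ [X]) a = s p a"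
  using assms unfolding win_strat_def by blast

lemma win_strat_persists:
  assumes "win_strat g A B s" "(p, a) \<in> fplays g A" "c \<noteq> []" "prefix c p"
    and "persists_along c p a"
  shows "s p a = s c a"
  using assms(2-5)
proof (induction p rule: rev_induct)
  case Nil
  then show ?case by simp
next
  case (snoc X p)
  show ?case
  proof (cases "c = p @ [X]")
    case False
    then have c: "prefix c p" "p \<noteq> []" using snoc.prems(2,3) by auto
    have persists: "persists_along c p a" using snoc.prems(4) by (rule persists_along_butlast)
    then have last: "a \<in> last p" using c(1) unfolding persists_along_def by blast
    have play: "play g A (p @ [X])" and "a \<in> X" using snoc.prems(1) unfolding fplays_def by auto
    then have "s (p @ [X]) a = s p a" using win_strat_snoc[OF assms(1) play c(2) _ last] by simp
    moreover have "(p, a) \<in> fplays g A"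
      using play_butlast[OF play c(2)] last unfolding fplays_def by simp
    ultimately show ?thesis using snoc.IH snoc.prems(2) c(1) persists by simp
  qed simp
qed

lemma win_strat_respects:
  assumes "win_strat g A B s"
  shows "(\<lambda>(p, a). s p a) respects gequiv g A"
proof (rule congruentI)
  fix x y assume "(x, y) \<in> gequiv g A"
  then obtain p q a c where "x = (p, a)" "y = (q, a)" "(p, a) \<in> fplays g A" "(q, a) \<in> fplays g A"
    "c \<noteq> []" "prefix c p" "prefix c q" "persists_along c p a" "persists_along c q a"
    by (cases x, cases y) (auto simp: gequiv_iff)
  moreover from this have "s p a = s c a" "s q a = s c a"
    using win_strat_persists[OF assms] by blast+
  ultimately show "(case x of (p, a) \<Rightarrow> s p a) = (case y of (p, a) \<Rightarrow> s p a)"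
    by simp
qed

section \<open>Strategies versus maps on the classes\<close>

definition strat_of_hom ::
    "guarding \<Rightarrow> ('r, 'a) struc \<Rightarrow> (('a set list \<times> 'a) set \<Rightarrow> 'b) \<Rightarrow> 'a set list \<Rightarrow> 'a \<Rightarrow> 'b" where
  "strat_of_hom g A h = (\<lambda>p a. if (p, a) \<in> fplays g A then h (gclass g A p a) else undefined)"

text \<open>\<^const>\<open>the_elem\<close> is junk unless \<open>s\<close> is constant on the class \<open>C\<close>;
  for winning strategies it is by \<open>win_strat_respects\<close>.\<close>
definition hom_of_strat ::
    "guarding \<Rightarrow> ('r, 'a) struc \<Rightarrow> ('a set list \<Rightarrow> 'a \<Rightarrow> 'b) \<Rightarrow> ('a set list \<times> 'a) set \<Rightarrow> 'b" where
  "hom_of_strat g A s =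
     (\<lambda>C. if C \<in> univ (GG g A) then the_elem ((\<lambda>(p, a). s p a) ` C) else undefined)"

lemma strat_of_hom_respects: "(\<lambda>(p, a). strat_of_hom g A h p a) respects gequiv g A"
proof (rule congruentI)
  fix x y assume xy: "(x, y) \<in> gequiv g A"
  obtain p a q b where xy_eq: "x = (p, a)" "y = (q, b)" by fastforce
  then have pq: "((p, a), (q, b)) \<in> gequiv g A" using xy by simp
  then have fp: "(p, a) \<in> fplays g A" "(q, b) \<in> fplays g A" unfolding gequiv_iff by blast+
  then have "gclass g A p a = gclass g A q b" using pq by (simp add: gclass_eq_iff)
  then show "(case x of (p, a) \<Rightarrow> strat_of_hom g A h p a) = (case y of (p, a) \<Rightarrow> strat_of_hom g A h p a)"
    using xy_eq fp by (simp add: strat_of_hom_def)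
qed

lemma hom_of_strat_gclass:
  assumes "(\<lambda>(p, a). s p a) respects gequiv g A" "(p, a) \<in> fplays g A"
  shows "hom_of_strat g A s (gclass g A p a) = s p a"
proof -
  have "the_elem ((\<lambda>(p, a). s p a) ` gclass g A p a) = s p a"
  proof (rule the_elem_image_unique)
    show "gclass g A p a \<noteq> {}"
      using equiv_class_self[OF gequiv_equiv assms(2)] unfolding gclass_def by blast
    show "(\<lambda>(p, a). s p a) y = s p a" if "y \<in> gclass g A p a" for y
      using congruentD[OF assms(1), of "(p, a)" y] that unfolding gclass_def by simp
  qed
  then show ?thesis using gclass_in_univ_GG[OF assms(2)] unfolding hom_of_strat_def by simp
qed

lemma hom_of_strat_strat_of_hom:
  assumes "h \<in> extensional (univ (GG g A))"
  shows "hom_of_strat g A (strat_of_hom g A h) = h"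
proof
  fix C show "hom_of_strat g A (strat_of_hom g A h) C = h C"
  proof (cases "C \<in> univ (GG g A)")
    case True
    then obtain p a where pa: "(p, a) \<in> fplays g A" "C = gclass g A p a" by (rule univ_GG_cases)
    then show ?thesis
      using hom_of_strat_gclass[OF strat_of_hom_respects pa(1)] by (simp add: strat_of_hom_def)
  next
    case False
    then show ?thesis using assms unfolding hom_of_strat_def extensional_def by simp
  qed
qed

lemma strat_of_hom_hom_of_strat:
  assumes "win_strat g A B s"
  shows "strat_of_hom g A (hom_of_strat g A s) = s"
proof (intro ext)
  fix p a show "strat_of_hom g A (hom_of_strat g A s) p a = s p a"
    using hom_of_strat_gclass[OF win_strat_respects[OF assms]] win_strat_undefined[OF assms]
    by (cases "(p, a) \<in> fplays g A") (simp_all add: strat_of_hom_def)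
qed

lemma hom_of_strat_extensional: "hom_of_strat g A s \<in> extensional (univ (GG g A))"
  unfolding hom_of_strat_def extensional_def by simp

section \<open>Homomorphisms from the comonad preserve guardedness\<close>

definition guard_support :: "guarding \<Rightarrow> ('r, 'a) struc \<Rightarrow> 'a set \<Rightarrow> bool" where
  "guard_support g A Y \<longleftrightarrow> Y \<noteq> {} \<and> finite Y \<and> Y \<subseteq> univ A \<and>
     (case g of
        Atom \<Rightarrow> (\<forall>a\<in>Y. \<forall>b\<in>Y. a = b)
      | Loose \<Rightarrow> (\<forall>a\<in>Y. \<forall>b\<in>Y. a \<noteq> b \<longrightarrow>
                   (\<exists>R. \<exists>as \<in> rel A R. set as \<subseteq> Y \<and> a \<in> set as \<and> b \<in> set as))
      | Clique \<Rightarrow> (\<forall>a\<in>Y. \<forall>b\<in>Y. a \<noteq> b \<longrightarrow>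
                   (\<exists>R. \<exists>as \<in> rel A R. a \<in> set as \<and> b \<in> set as)))"

lemma guarded_iff:
  "guarded g A X \<longleftrightarrow> (\<exists>R. \<exists>as \<in> rel A R. X \<subseteq> set as) \<or> (\<exists>Y. X \<subseteq> Y \<and> guard_support g A Y)"
  unfolding guarded_def guard_support_def by blast

lemma guarded_rel: "as \<in> rel A R \<Longrightarrow> guarded g A (set as)"
  unfolding guarded_iff by blast

lemma guarded_subset: "guarded g A Y \<Longrightarrow> X \<subseteq> Y \<Longrightarrow> guarded g A X"
  unfolding guarded_iff by (meson order_trans)

lemma guarded_subset_univ: "wf_struc ar B \<Longrightarrow> guarded g B Y \<Longrightarrow> Y \<subseteq> univ B"
  unfolding guarded_iff guard_support_def wf_struc_def by blast

lemma hom_GG_rel: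
  assumes "hom (GG g A) B h" "play g A p" "as \<in> rel A R" "set as \<subseteq> last p"
  shows "map (\<lambda>a. h (gclass g A p a)) as \<in> rel B R"
proof -
  have "map (gclass g A p) as \<in> rel (GG g A) R" using assms(2-4) unfolding rel_GG by blast
  then have "map h (map (gclass g A p) as) \<in> rel B R" using assms(1) unfolding hom_def by blast
  then show ?thesis by (simp add: comp_def)
qed

text \<open>A tuple of \<open>A\<close> meeting the last move need not lie inside it; playing its support as
  the next move realises it in \<open>G A\<close> without changing the classes of the current elements.\<close>
lemma hom_GG_rel_snoc:
  assumes hom: "hom (GG g A) B h" and play: "play g A p" and as: "as \<in> rel A R"
  shows "\<exists>bs \<in> rel B R. \<forall>a \<in> set as \<inter> last p. h (gclass g A p a) \<in> set bs"
proof
  let ?p' = "p @ [set as]"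
  have play': "play g A ?p'" using play guarded_rel[OF as] by (rule play_snoc)
  show "map (\<lambda>a. h (gclass g A ?p' a)) as \<in> rel B R" using hom_GG_rel[OF hom play' as] by simp
  show "\<forall>a \<in> set as \<inter> last p. h (gclass g A p a) \<in> set (map (\<lambda>a. h (gclass g A ?p' a)) as)"
  proof
    fix a assume a: "a \<in> set as \<inter> last p"
    then have "(p, a) \<in> fplays g A" using play unfolding fplays_def by simp
    then have "gclass g A ?p' a = gclass g A p a" using gclass_snoc[OF _ play'] a by simp
    then show "h (gclass g A p a) \<in> set (map (\<lambda>a. h (gclass g A ?p' a)) as)"
      using a by (auto intro: image_eqI[where x = a])
  qed
qed

lemma hom_GG_guard_support:
  assumes hom: "hom (GG g A) B h" and play: "play g A p" and supp: "guard_support g A (last p)"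
  shows "guard_support g B ((\<lambda>a. h (gclass g A p a)) ` last p)"
proof -
  let ?k = "\<lambda>a. h (gclass g A p a)"
  have fplays: "(p, a) \<in> fplays g A" if "a \<in> last p" for a
    using play that unfolding fplays_def by simp
  have "?k ` last p \<subseteq> univ B"
    using hom gclass_in_univ_GG[OF fplays] unfolding hom_def by blast
  moreover have "?k ` last p \<noteq> {}" "finite (?k ` last p)"
    using supp unfolding guard_support_def by auto
  moreover have "case g of
        Atom \<Rightarrow> (\<forall>b\<in>?k ` last p. \<forall>b'\<in>?k ` last p. b = b')
      | Loose \<Rightarrow> (\<forall>b\<in>?k ` last p. \<forall>b'\<in>?k ` last p. b \<noteq> b' \<longrightarrow>
                   (\<exists>R. \<exists>bs \<in> rel B R. set bs \<subseteq> ?k ` last p \<and> b \<in> set bs \<and> b' \<in> set bs))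
      | Clique \<Rightarrow> (\<forall>b\<in>?k ` last p. \<forall>b'\<in>?k ` last p. b \<noteq> b' \<longrightarrow>
                   (\<exists>R. \<exists>bs \<in> rel B R. b \<in> set bs \<and> b' \<in> set bs))"
  proof (cases g)
    case Atom
    then show ?thesis using supp unfolding guard_support_def by auto
  next
    case Loose
    have "\<exists>R. \<exists>bs \<in> rel B R. set bs \<subseteq> ?k ` last p \<and> ?k a \<in> set bs \<and> ?k a' \<in> set bs"
      if aa': "a \<in> last p" "a' \<in> last p" "?k a \<noteq> ?k a'" for a a'
    proof -
      have "a \<noteq> a'" using aa'(3) by auto
      obtain R as where as: "as \<in> rel A R" "set as \<subseteq> last p" "a \<in> set as" "a' \<in> set as"
        using supp Loose aa'(1,2) \<open>a \<noteq> a'\<close> unfolding guard_support_def by (simp, blast)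
      then show ?thesis using hom_GG_rel[OF hom play as(1,2)] by (intro exI bexI[of _ "map ?k as"]) auto
    qed
    then show ?thesis using Loose by auto
  next
    case Clique
    have "\<exists>R. \<exists>bs \<in> rel B R. ?k a \<in> set bs \<and> ?k a' \<in> set bs"
      if aa': "a \<in> last p" "a' \<in> last p" "?k a \<noteq> ?k a'" for a a'
    proof -
      have "a \<noteq> a'" using aa'(3) by auto
      obtain R as where as: "as \<in> rel A R" "a \<in> set as" "a' \<in> set as"
        using supp Clique aa'(1,2) \<open>a \<noteq> a'\<close> unfolding guard_support_def by (simp, blast)
      then show ?thesis using hom_GG_rel_snoc[OF hom play as(1)] aa'(1,2) by blast
    qed
    then show ?thesis using Clique by auto
  qed
  ultimately show ?thesis unfolding guard_support_def by (intro conjI)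
qed

lemma gclass_snoc_image:
  assumes "play g A p" "play g A (p @ [X])" "last p \<subseteq> X"
  shows "(\<lambda>a. f (gclass g A p a)) ` last p \<subseteq> (\<lambda>a. f (gclass g A (p @ [X]) a)) ` X"
proof
  fix b assume "b \<in> (\<lambda>a. f (gclass g A p a)) ` last p"
  then obtain a where a: "a \<in> last p" "b = f (gclass g A p a)" by blast
  moreover have "(p, a) \<in> fplays g A" using assms(1) a(1) unfolding fplays_def by simp
  moreover have "a \<in> X" using assms(3) a(1) by blast
  ultimately have "b = f (gclass g A (p @ [X]) a)" "a \<in> X" using gclass_snoc[OF _ assms(2)] by simp_all
  then show "b \<in> (\<lambda>a. f (gclass g A (p @ [X]) a)) ` X" by blast
qed

lemma hom_GG_guarded:
  assumes hom: "hom (GG g A) B h" and play: "play g A p"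
  shows "guarded g B ((\<lambda>a. h (gclass g A p a)) ` last p)"
proof -
  have "guarded g A (last p)" using play unfolding play_def by simp
  then consider (tuple) R as where "as \<in> rel A R" "last p \<subseteq> set as"
    | (support) Y where "last p \<subseteq> Y" "guard_support g A Y"
    unfolding guarded_iff by blast
  then show ?thesis
  proof cases
    case tuple
    then obtain bs where "bs \<in> rel B R" "\<forall>a \<in> last p. h (gclass g A p a) \<in> set bs"
      using hom_GG_rel_snoc[OF hom play tuple(1)] by blast
    then show ?thesis by (blast intro: guarded_subset[OF guarded_rel])
  next
    case support
    let ?p' = "p @ [Y]"
    have "guarded g A Y" using support(2) unfolding guarded_iff by blast
    then have play': "play g A ?p'" using play by (intro play_snoc)
    have "guard_support g B ((\<lambda>a. h (gclass g A ?p' a)) ` Y)"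
      using hom_GG_guard_support[OF hom play'] support(2) by simp
    moreover have "(\<lambda>a. h (gclass g A p a)) ` last p \<subseteq> (\<lambda>a. h (gclass g A ?p' a)) ` Y"
      using gclass_snoc_image[OF play play' support(1)] .
    ultimately show ?thesis unfolding guarded_iff by blast
  qed
qed

lemma win_strat_strat_of_hom:
  assumes hom: "hom (GG g A) B h"
  shows "win_strat g A B (strat_of_hom g A h)"
  unfolding win_strat_def
proof (intro conjI allI impI)
  fix p a assume "(p, a) \<notin> fplays g A"
  then show "strat_of_hom g A h p a = undefined" unfolding strat_of_hom_def by simp
next
  fix p assume play: "play g A p"
  have last: "strat_of_hom g A h p a = h (gclass g A p a)" if "a \<in> last p" for a
    using play that unfolding strat_of_hom_def fplays_def by simp
  have "partial_hom A B (last p) ((\<lambda>a. h (gclass g A p a)) ` last p) (strat_of_hom g A h p)"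
    unfolding partial_hom_def
  proof (intro conjI allI ballI impI)
    show "strat_of_hom g A h p ` last p \<subseteq> (\<lambda>a. h (gclass g A p a)) ` last p"
      using last by auto
    fix R as assume as: "as \<in> rel A R" "set as \<subseteq> last p"
    then have map_eq: "map (strat_of_hom g A h p) as = map (\<lambda>a. h (gclass g A p a)) as"
      using last by (intro map_cong) auto
    show "map (strat_of_hom g A h p) as \<in> rel B R"
      unfolding map_eq by (rule hom_GG_rel[OF hom play as])
  qed
  then show "\<exists>Y. guarded g B Y \<and> partial_hom A B (last p) Y (strat_of_hom g A h p)"
    using hom_GG_guarded[OF hom play] by blast
next
  fix p q X assume "play g A p" and pq: "p = q @ [X] \<and> q \<noteq> []"
  then have play: "play g A (q @ [X])" "play g A q" using play_butlast by auto
  show "\<forall>a \<in> X \<inter> last q. strat_of_hom g A h p a = strat_of_hom g A h q a"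
  proof
    fix a assume a: "a \<in> X \<inter> last q"
    then have "(q, a) \<in> fplays g A" "(q @ [X], a) \<in> fplays g A"
      using play unfolding fplays_def by auto
    then show "strat_of_hom g A h p a = strat_of_hom g A h q a"
      using gclass_snoc[of q a g A X] play(1) a pq unfolding strat_of_hom_def by simp
  qed
qed

lemma hom_hom_of_strat:
  assumes wf: "wf_struc ar B" and strat: "win_strat g A B s"
  shows "hom (GG g A) B (hom_of_strat g A s)"
  unfolding hom_def
proof (intro conjI allI ballI subsetI)
  have on_class: "hom_of_strat g A s (gclass g A p a) = s p a" if "(p, a) \<in> fplays g A" for p a
    using hom_of_strat_gclass[OF win_strat_respects[OF strat] that] .
  {
    fix b assume "b \<in> hom_of_strat g A s ` univ (GG g A)"
    then obtain p a where pa: "(p, a) \<in> fplays g A" "b = s p a"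
      using on_class by (auto elim: univ_GG_cases)
    then have "play g A p" "a \<in> last p" unfolding fplays_def by auto
    moreover obtain Y where "guarded g B Y" "partial_hom A B (last p) Y (s p)"
      using win_strat_partial_hom[OF strat \<open>play g A p\<close>] by blast
    ultimately show "b \<in> univ B"
      using pa(2) guarded_subset_univ[OF wf] unfolding partial_hom_def by blast
  }
  fix R t assume "t \<in> rel (GG g A) R"
  then obtain p as where t: "t = map (gclass g A p) as" "play g A p" "as \<in> rel A R" "set as \<subseteq> last p"
    unfolding rel_GG by blast
  then have "map (hom_of_strat g A s) t = map (s p) as"
    using on_class unfolding fplays_def by auto
  moreover obtain Y where "partial_hom A B (last p) Y (s p)"
    using win_strat_partial_hom[OF strat t(2)] by blast
  ultimately show "map (hom_of_strat g A s) t \<in> rel B R"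
    using t(3,4) unfolding partial_hom_def by simp
qed

theorem theorem3p7:
  fixes g :: guarding and ar :: "'r \<Rightarrow> nat"
    and A :: "('r, 'a) struc" and B :: "('r, 'b) struc"
  assumes "wf_struc ar A" and "wf_struc ar B"
  shows "bij_betw (\<lambda>h p a. if (p, a) \<in> fplays g A then h (gclass g A p a) else undefined)
                  {h. h \<in> extensional (univ (GG g A)) \<and> hom (GG g A) B h}
                       {s. win_strat g A B s}
         \<and> (guarded_sim g A B \<longleftrightarrow> (\<exists>h. hom (GG g A) B h))"
proof
  have "bij_betw (strat_of_hom g A) {h. h \<in> extensional (univ (GG g A)) \<and> hom (GG g A) B h}
                                    {s. win_strat g A B s}"
    by (rule bij_betw_byWitness[where f' = "hom_of_strat g A"])
      (auto simp: hom_of_strat_strat_of_hom strat_of_hom_hom_of_strat win_strat_strat_of_hom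
        hom_of_strat_extensional hom_hom_of_strat[OF assms(2)])
  then show "bij_betw (\<lambda>h p a. if (p, a) \<in> fplays g A then h (gclass g A p a) else undefined)
                  {h. h \<in> extensional (univ (GG g A)) \<and> hom (GG g A) B h}
                       {s. win_strat g A B s}"
    unfolding strat_of_hom_def[abs_def] .
  show "guarded_sim g A B \<longleftrightarrow> (\<exists>h. hom (GG g A) B h)"
    unfolding guarded_sim_def
    using hom_hom_of_strat[OF assms(2)] win_strat_strat_of_hom by blast
qed

end
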